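(* Let $n\ge1$, $1\le i\le n$ be integers, $\alpha,\beta>0$, $\tau\ge0$ with $i\beta(\tau+1)>\tau$. Put $$a=\frac{(n-i+1)\tau\beta+(n-i+1)\beta+\tau}{\beta},\qquad b=\frac{i\tau\beta+i\beta-\tau}{\beta}.$$ Then $J^{(i)}_\tau(\alpha)=A_1+A_2-A_3$, where $$A_1=\left(\frac{\beta}{\alpha}\right)^{\tau+2}(n-i+1)^2c(i,n)^{\tau+1}B(a,b),$$ $$A_2=\left(\frac{\beta}{\alpha}\right)^{\tau+2}(n+1)^2c(i,n)^{\tau+1}\cdot\frac{(n-i+1)\tau\beta+(n-i+2)\beta+\tau}{\beta[(n+1)\tau+(n+2)]}\cdot\frac{(n-i+1)\tau\beta+(n-i+1)\beta+\tau}{\beta[(n+1)\tau+(n+1)]}\,B(a,b),$$ $$A_3=\left(\frac{\beta}{\alpha}\right)^{\tau+2}2(n-i+1)(n+1)c(i,n)^{\tau+1}\cdot\frac{(n-i+1)\tau\beta+(n-i+1)\beta+\tau}{(n+1)\tau\beta+(n+1)\beta}\,B(a,b).$$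
   Context: For integers $1\le i\le n$, $c(i,n)=\frac{n!}{(n-i)!(i-1)!}$ and $f^{(i)}_{\alpha,\beta}(x)=\frac{c(i,n)\beta (x/\alpha)^{i\beta-1}}{\alpha(1+(x/\alpha)^\beta)^{n+1}}$, $x>0$, is the density of the $i$-th order statistic of a sample of size $n$ from the log-logistic distribution with scale $\alpha>0$ and shape $\beta>0$ (density $\beta\alpha^\beta x^{\beta-1}/(x^\beta+\alpha^\beta)^2$). With $\beta$ regarded as known, $J^{(i)}_\tau(\alpha)=\int_0^\infty\left(\frac{\partial}{\partial\alpha}\log f^{(i)}_{\alpha,\beta}(x)\right)^2 f^{(i)}_{\alpha,\beta}(x)^{\tau+1}\,dx$. $B(a,b)=\int_0^1x^{a-1}(1-x)^{b-1}dx$ is the Beta function. *)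

theory Defs
  imports "HOL-Analysis.Analysis"
begin

definition c_coef :: "nat \<Rightarrow> nat \<Rightarrow> real" where
  "c_coef i n = fact n / (fact (n - i) * fact (i - 1))"

text \<open>Density of the i-th order statistic of a sample of size n from the
  log-logistic distribution with scale alpha and shape beta.\<close>
definition f_os :: "nat \<Rightarrow> nat \<Rightarrow> real \<Rightarrow> real \<Rightarrow> real \<Rightarrow> real" where
  "f_os i n \<alpha> \<beta> x =
     c_coef i n * \<beta> * (x / \<alpha>) powr (real i * \<beta> - 1)
     / (\<alpha> * (1 + (x / \<alpha>) powr \<beta>) ^ (n + 1))"

definition J_os :: "nat \<Rightarrow> nat \<Rightarrow> real \<Rightarrow> real \<Rightarrow> real \<Rightarrow> real" where
  "J_os i n \<beta> \<tau> \<alpha> =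
     (LBINT x:{0<..}. (deriv (\<lambda>a. ln (f_os i n a \<beta> x)) \<alpha>)\<^sup>2
                        * (f_os i n \<alpha> \<beta> x) powr (\<tau> + 1))"

end

theory Submission
  imports Defs
begin

text \<open>
  The log-logistic distribution function \<open>F x = t / (1 + t)\<close>, \<open>t = (x / \<alpha>) powr \<beta>\<close>,
  maps \<open>{0<..}\<close> bijectively onto \<open>{0<..<1}\<close>. After the substitution \<open>u = F x\<close>
  the score is \<open>\<beta> / \<alpha> * ((n + 1) u - i)\<close>, and the density power times the Jacobian is
  \<open>(\<beta> / \<alpha>) powr \<tau> * c(i,n) powr (\<tau> + 1) * u powr (b - 1) * (1 - u) powr (a - 1)\<close>,
  so \<open>J\<close> is the integral of \<open>((n + 1) u - i)\<^sup>2\<close> against a Beta weight. Writing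
  \<open>(n + 1) u - i = (n + 1 - i) - (n + 1) (1 - u)\<close> reduces it to \<open>B(b, a)\<close>,
  \<open>B(b, a + 1)\<close> and \<open>B(b, a + 2)\<close>, and the recurrence
  \<open>B(b, a + 1) = a / (a + b) * B(a, b)\<close> produces the three terms.
\<close>

lemma set_lborel_integral_eq_integral:
  fixes H :: "'a::euclidean_space \<Rightarrow> real"
  assumes "H absolutely_integrable_on S" "H \<in> borel_measurable borel" "S \<in> sets borel"
  shows "(LINT x:S|lborel. H x) = integral S H"
proof (rule set_borel_integral_eq_integral)
  have "(\<lambda>x. indicator S x *\<^sub>R H x) \<in> borel_measurable lborel"
    using assms(2,3) by measurable
  then show "set_integrable lborel S H"
    using assms(1) integrable_completion
    unfolding absolutely_integrable_on_def set_integrable_def by blast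
qed

lemma Beta_plus1_right_real:
  fixes x y :: real
  assumes "x > 0" "y > 0"
  shows "Beta x (y + 1) = y / (x + y) * Beta x y"
proof -
  have "y \<notin> \<int>\<^sub>\<le>\<^sub>0" using assms(2) nonpos_Ints_nonpos by fastforce
  then have "(x + y) * Beta x (y + 1) = y * Beta x y" by (rule Beta_plus1_right)
  then show ?thesis using assms by (simp add: field_simps)
qed

lemma has_integral_Beta_quadratic:
  fixes a b p q :: real
  assumes a: "a > 0" and b: "b > 0"
  shows "((\<lambda>u. (p * u - q)\<^sup>2 * u powr (b - 1) * (1 - u) powr (a - 1)) has_integral
          ((p - q)\<^sup>2 - 2 * (p - q) * p * (a / (a + b)) + p\<^sup>2 * (a / (a + b)) * ((a + 1) / (a + b + 1)))
          * Beta a b) {0<..<1}"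
proof -
  have B: "((\<lambda>u. u powr (b - 1) * (1 - u) powr (c - 1)) has_integral Beta b c) {0<..<1}"
    if "c > 0" for c
    using has_integral_Beta_real[OF b that] by (simp add: has_integral_Icc_iff_Ioo)
  have I: "((\<lambda>u. (p - q)\<^sup>2 * (u powr (b - 1) * (1 - u) powr (a - 1))
              - 2 * (p - q) * p * (u powr (b - 1) * (1 - u) powr (a + 1 - 1))
              + p\<^sup>2 * (u powr (b - 1) * (1 - u) powr (a + 1 + 1 - 1))) has_integral
          (p - q)\<^sup>2 * Beta b a - 2 * (p - q) * p * Beta b (a + 1) + p\<^sup>2 * Beta b (a + 1 + 1))
          {0<..<1}"
    using a by (intro has_integral_add has_integral_diff has_integral_mult_right B) auto
  have expand: "(p * u - q)\<^sup>2 * u powr (b - 1) * (1 - u) powr (a - 1)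
      = (p - q)\<^sup>2 * (u powr (b - 1) * (1 - u) powr (a - 1))
        - 2 * (p - q) * p * (u powr (b - 1) * (1 - u) powr (a + 1 - 1))
        + p\<^sup>2 * (u powr (b - 1) * (1 - u) powr (a + 1 + 1 - 1))" if "u \<in> {0<..<1}" for u
  proof -
    have shift: "(1 - u) powr (c + 1 - 1) = (1 - u) powr (c - 1) * (1 - u)" for c
      using that powr_add[of "1 - u" "c - 1" 1] by simp
    show ?thesis
      unfolding shift by (simp add: power2_eq_square algebra_simps)
  qed
  have "Beta b (a + 1) = a / (a + b) * Beta a b"
    and "Beta b (a + 1 + 1) = (a + 1) / (a + b + 1) * (a / (a + b)) * Beta a b"
    using a b Beta_plus1_right_real[of b a] Beta_plus1_right_real[of b "a + 1"]
    by (simp_all add: Beta_commute add_ac)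
  then have "(p - q)\<^sup>2 * Beta b a - 2 * (p - q) * p * Beta b (a + 1) + p\<^sup>2 * Beta b (a + 1 + 1)
      = ((p - q)\<^sup>2 - 2 * (p - q) * p * (a / (a + b)) + p\<^sup>2 * (a / (a + b)) * ((a + 1) / (a + b + 1)))
        * Beta a b"
    by (simp add: Beta_commute algebra_simps)
  with I show ?thesis
    by (metis (no_types, lifting) expand has_integral_cong)
qed

definition loglogistic_cdf :: "real \<Rightarrow> real \<Rightarrow> real \<Rightarrow> real" where
  "loglogistic_cdf \<alpha> \<beta> x = (x / \<alpha>) powr \<beta> / (1 + (x / \<alpha>) powr \<beta>)"

definition loglogistic_quantile :: "real \<Rightarrow> real \<Rightarrow> real \<Rightarrow> real" where
  "loglogistic_quantile \<alpha> \<beta> u = \<alpha> * (u / (1 - u)) powr (1 / \<beta>)"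

lemma c_coef_pos: "c_coef i n > 0"
  unfolding c_coef_def by simp

lemma ln_f_os:
  assumes "a > 0" "x > 0" "\<beta> > 0"
  shows "ln (f_os i n a \<beta> x) = ln (c_coef i n * \<beta>) + (real i * \<beta> - 1) * (ln x - ln a) - ln a
           - real (n + 1) * ln (1 + exp (\<beta> * (ln x - ln a)))"
proof -
  define C P where "C = c_coef i n * \<beta>" and "P = 1 + exp (\<beta> * (ln x - ln a))"
  have pos: "C > 0" "P > 0"
    using assms c_coef_pos[of i n] by (simp_all add: C_def P_def add_pos_pos)
  have "(x / a) powr s = exp (s * (ln x - ln a))" for s
    using assms by (simp add: powr_def ln_div)
  then have "f_os i n a \<beta> x = C * exp ((real i * \<beta> - 1) * (ln x - ln a)) / (a * P ^ (n + 1))"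
    unfolding f_os_def C_def P_def by simp
  then show ?thesis
    using assms pos unfolding C_def[symmetric] P_def[symmetric]
    by (simp add: ln_div ln_mult ln_realpow algebra_simps)
qed

lemma deriv_ln_f_os:
  assumes "\<alpha> > 0" "x > 0" "\<beta> > 0"
  shows "deriv (\<lambda>a. ln (f_os i n a \<beta> x)) \<alpha>
           = \<beta> / \<alpha> * (real (n + 1) * loglogistic_cdf \<alpha> \<beta> x - real i)"
proof -
  define L where "L a = ln (c_coef i n * \<beta>) + (real i * \<beta> - 1) * (ln x - ln a) - ln a
           - real (n + 1) * ln (1 + exp (\<beta> * (ln x - ln a)))" for a
  define E where "E = exp (\<beta> * (ln x - ln \<alpha>))"
  have E: "(x / \<alpha>) powr \<beta> = E" "E > 0"
    unfolding E_def using assms by (simp_all add: powr_def ln_div)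
  have "(L has_real_derivative (real i * \<beta> - 1) * (0 - 1 / \<alpha>) - 1 / \<alpha>
      - real (n + 1) * (E * (\<beta> * (0 - 1 / \<alpha>)) / (1 + E))) (at \<alpha>)"
    unfolding L_def E_def using assms
    by (auto intro!: derivative_eq_intros simp: add_pos_pos) (simp add: mult_ac)
  also have "(real i * \<beta> - 1) * (0 - 1 / \<alpha>) - 1 / \<alpha>
      - real (n + 1) * (E * (\<beta> * (0 - 1 / \<alpha>)) / (1 + E))
      = \<beta> / \<alpha> * (real (n + 1) * loglogistic_cdf \<alpha> \<beta> x - real i)"
    using assms E by (simp add: loglogistic_cdf_def add_pos_pos divide_simps) (simp add: algebra_simps)
  finally have "((\<lambda>a. ln (f_os i n a \<beta> x)) has_real_derivative
      \<beta> / \<alpha> * (real (n + 1) * loglogistic_cdf \<alpha> \<beta> x - real i)) (at \<alpha>)"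
    by (rule has_field_derivative_transform_within_open[where S = "{0<..}"])
      (use assms ln_f_os in \<open>auto simp: L_def\<close>)
  then show ?thesis
    by (rule DERIV_imp_deriv)
qed

lemma loglogistic_quantile_pos:
  "\<alpha> > 0 \<Longrightarrow> u \<in> {0<..<1} \<Longrightarrow> loglogistic_quantile \<alpha> \<beta> u > 0"
  by (simp add: loglogistic_quantile_def)

lemma loglogistic_cdf_quantile:
  assumes "\<alpha> > 0" "\<beta> > 0" "u \<in> {0<..<1}"
  shows "loglogistic_cdf \<alpha> \<beta> (loglogistic_quantile \<alpha> \<beta> u) = u"
  using assms by (simp add: loglogistic_cdf_def loglogistic_quantile_def powr_powr field_simps)

lemma loglogistic_quantile_cdf:
  assumes "\<alpha> > 0" "\<beta> > 0" "x > 0"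
  shows "loglogistic_quantile \<alpha> \<beta> (loglogistic_cdf \<alpha> \<beta> x) = x"
proof -
  have "t / (1 + t) / (1 - t / (1 + t)) = t" if "t > 0" for t :: real
    using that by (simp add: field_simps)
  then have "loglogistic_cdf \<alpha> \<beta> x / (1 - loglogistic_cdf \<alpha> \<beta> x) = (x / \<alpha>) powr \<beta>"
    using assms unfolding loglogistic_cdf_def by simp
  then show ?thesis
    using assms by (simp add: loglogistic_quantile_def powr_powr)
qed

lemma bij_betw_loglogistic_quantile:
  assumes "\<alpha> > 0" "\<beta> > 0"
  shows "bij_betw (loglogistic_quantile \<alpha> \<beta>) {0<..<1} {0<..}"
proof (rule bij_betw_byWitness[where f' = "loglogistic_cdf \<alpha> \<beta>"])
  have "loglogistic_cdf \<alpha> \<beta> x \<in> {0<..<1}" if "x > 0" for x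
  proof -
    define t where "t = (x / \<alpha>) powr \<beta>"
    have "t > 0" using assms that by (simp add: t_def)
    then show ?thesis unfolding loglogistic_cdf_def t_def[symmetric] by simp
  qed
  then show "loglogistic_cdf \<alpha> \<beta> ` {0<..} \<subseteq> {0<..<1}" by auto
qed (use assms loglogistic_cdf_quantile loglogistic_quantile_cdf loglogistic_quantile_pos in auto)

lemma loglogistic_quantile_has_derivative:
  assumes "\<beta> > 0" "u \<in> {0<..<1}"
  shows "(loglogistic_quantile \<alpha> \<beta> has_field_derivative
           loglogistic_quantile \<alpha> \<beta> u / (\<beta> * u * (1 - u))) (at u within S)"
proof -
  define s where "s = u / (1 - u)"
  have u: "u > 0" "1 - u > 0" "s > 0" using assms by (auto simp: s_def)
  have odds: "((\<lambda>u. u / (1 - u)) has_real_derivative 1 / (1 - u)\<^sup>2) (at u within S)"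
    using u by (auto intro!: derivative_eq_intros simp: field_simps power2_eq_square)
  have root: "((\<lambda>v. \<alpha> * v powr (1 / \<beta>)) has_real_derivative
      \<alpha> * (1 / \<beta> * s powr (1 / \<beta> - 1))) (at s)"
    using u by (intro DERIV_cmult has_real_derivative_powr)
  have "\<alpha> * (1 / \<beta> * s powr (1 / \<beta> - 1)) * (1 / (1 - u)\<^sup>2)
        = loglogistic_quantile \<alpha> \<beta> u / (\<beta> * u * (1 - u))"
    using u by (simp add: loglogistic_quantile_def s_def[symmetric] powr_diff)
      (simp add: s_def field_simps power2_eq_square)
  then show ?thesis
    using DERIV_chain2[OF root[unfolded s_def] odds]
    by (simp add: loglogistic_quantile_def[abs_def] s_def)
qed

lemma loglogistic_quantile_jacobian:
  assumes "\<alpha> > 0" "\<beta> > 0" "u \<in> {0<..<1}"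
  shows "loglogistic_quantile \<alpha> \<beta> u / (\<beta> * u * (1 - u))
           = \<alpha> / \<beta> * u powr (1 / \<beta> - 1) / (1 - u) powr (1 / \<beta> + 1)"
  using assms by (simp add: loglogistic_quantile_def powr_divide powr_diff powr_add)

lemma loglogistic_quantile_substitution:
  fixes H :: "real \<Rightarrow> real"
  assumes "\<alpha> > 0" "\<beta> > 0"
    and "((\<lambda>u. loglogistic_quantile \<alpha> \<beta> u / (\<beta> * u * (1 - u))
                  * H (loglogistic_quantile \<alpha> \<beta> u)) has_integral I) {0<..<1}"
    and "\<And>u. u \<in> {0<..<1} \<Longrightarrow> H (loglogistic_quantile \<alpha> \<beta> u) \<ge> 0"
  shows "H absolutely_integrable_on {0<..}" "integral {0<..} H = I"
proof -
  let ?g' = "\<lambda>u. loglogistic_quantile \<alpha> \<beta> u / (\<beta> * u * (1 - u))"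
  have g'_pos: "?g' u > 0" if "u \<in> {0<..<1}" for u
    using that assms loglogistic_quantile_pos[of \<alpha> u \<beta>] by simp
  have "((\<lambda>u. \<bar>?g' u\<bar> * H (loglogistic_quantile \<alpha> \<beta> u)) has_integral I) {0<..<1}"
    using assms(3) by (rule has_integral_cong[THEN iffD2, rotated])
      (use g'_pos in \<open>simp only: abs_of_pos\<close>)
  moreover have "(\<lambda>u. \<bar>?g' u\<bar> * H (loglogistic_quantile \<alpha> \<beta> u))
      absolutely_integrable_on {0<..<1}"
    using calculation g'_pos assms(4)
    by (intro nonnegative_absolutely_integrable_1) (auto simp: has_integral_integrable)
  ultimately have "H absolutely_integrable_on loglogistic_quantile \<alpha> \<beta> ` {0<..<1}
      \<and> integral (loglogistic_quantile \<alpha> \<beta> ` {0<..<1}) H = I"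
    using has_absolute_integral_change_of_variables_1'[OF _ loglogistic_quantile_has_derivative
        bij_betw_imp_inj_on[OF bij_betw_loglogistic_quantile[OF assms(1,2)]]] assms(2)
    by (auto simp: integral_unique)
  then show "H absolutely_integrable_on {0<..}" "integral {0<..} H = I"
    using bij_betw_imp_surj_on[OF bij_betw_loglogistic_quantile[OF assms(1,2)]] by auto
qed

lemma f_os_loglogistic_quantile:
  assumes "\<alpha> > 0" "\<beta> > 0" "u \<in> {0<..<1}"
  shows "f_os i n \<alpha> \<beta> (loglogistic_quantile \<alpha> \<beta> u)
           = c_coef i n * \<beta> / \<alpha> * u powr (real i - 1 / \<beta>)
             * (1 - u) powr (real n + 1 - real i + 1 / \<beta>)"
proof -
  define s where "s = u / (1 - u)"
  have s: "s > 0" "1 + s = 1 / (1 - u)" using assms by (auto simp: s_def field_simps)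
  have "(s powr (1 / \<beta>)) powr (real i * \<beta> - 1) = s powr (real i - 1 / \<beta>)"
    using assms by (simp add: powr_powr field_simps)
  then have "f_os i n \<alpha> \<beta> (loglogistic_quantile \<alpha> \<beta> u)
           = c_coef i n * \<beta> / \<alpha> * s powr (real i - 1 / \<beta>) * (1 - u) ^ (n + 1)"
    using assms s unfolding f_os_def loglogistic_quantile_def s_def[symmetric]
    by (simp add: powr_powr power_divide)
  also have "\<dots> = c_coef i n * \<beta> / \<alpha> * u powr (real i - 1 / \<beta>)
             * ((1 - u) powr (real n + 1) / (1 - u) powr (real i - 1 / \<beta>))"
    using assms by (simp add: s_def powr_divide powr_add powr_realpow)
  also have "(1 - u) powr (real n + 1) / (1 - u) powr (real i - 1 / \<beta>)
             = (1 - u) powr (real n + 1 - real i + 1 / \<beta>)"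
    by (simp add: powr_diff[symmetric] algebra_simps)
  finally show ?thesis by simp
qed

lemma J_os_integrand_loglogistic_quantile:
  assumes "\<alpha> > 0" "\<beta> > 0" "u \<in> {0<..<1}"
  shows "loglogistic_quantile \<alpha> \<beta> u / (\<beta> * u * (1 - u))
           * ((\<beta> / \<alpha> * (real (n + 1) * loglogistic_cdf \<alpha> \<beta> (loglogistic_quantile \<alpha> \<beta> u)
                               - real i))\<^sup>2
              * f_os i n \<alpha> \<beta> (loglogistic_quantile \<alpha> \<beta> u) powr (\<tau> + 1))
         = (\<beta> / \<alpha>) powr (\<tau> + 2) * c_coef i n powr (\<tau> + 1) * (real (n + 1) * u - real i)\<^sup>2
           * u powr ((real i - 1 / \<beta>) * (\<tau> + 1) + (1 / \<beta> - 1))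
           * (1 - u) powr ((real n + 1 - real i + 1 / \<beta>) * (\<tau> + 1) - (1 / \<beta> + 1))"
    (is "?L = _ * _ * ?Q * u powr (?p * _ + ?p') * (1 - u) powr (?q * _ - ?q')")
proof -
  have u: "u > 0" "1 - u > 0" using assms by auto
  have "(c_coef i n * \<beta> / \<alpha> * u powr ?p * (1 - u) powr ?q) powr (\<tau> + 1)
      = c_coef i n powr (\<tau> + 1) * (\<beta> / \<alpha>) powr (\<tau> + 1) * u powr (?p * (\<tau> + 1))
        * (1 - u) powr (?q * (\<tau> + 1))"
    using assms u c_coef_pos[of i n] by (simp add: powr_mult powr_divide powr_powr)
  then have "?L = (\<beta> / \<alpha> * (\<beta> / \<alpha>) powr (\<tau> + 1)) * c_coef i n powr (\<tau> + 1) * ?Q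
        * (u powr (?p * (\<tau> + 1)) * u powr ?p') * ((1 - u) powr (?q * (\<tau> + 1)) / (1 - u) powr ?q')"
    using assms
    by (simp add: loglogistic_quantile_jacobian loglogistic_cdf_quantile f_os_loglogistic_quantile
        power2_eq_square) (simp add: mult_ac)
  also have "\<dots> = (\<beta> / \<alpha>) powr (\<tau> + 2) * c_coef i n powr (\<tau> + 1) * ?Q
        * u powr (?p * (\<tau> + 1) + ?p') * (1 - u) powr (?q * (\<tau> + 1) - ?q')"
    using assms powr_add[of "\<beta> / \<alpha>" 1 "\<tau> + 1"] powr_add[of u] powr_diff[of "1 - u"]
    by (simp add: ac_simps)
  finally show ?thesis .
qed

lemma J_os_eq_Beta:
  assumes "\<alpha> > 0" "\<beta> > 0"
    and a: "a = (real n + 1 - real i + 1 / \<beta>) * (\<tau> + 1) - 1 / \<beta>" "a > 0"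
    and b: "b = (real i - 1 / \<beta>) * (\<tau> + 1) + 1 / \<beta>" "b > 0"
  shows "J_os i n \<beta> \<tau> \<alpha> = (\<beta> / \<alpha>) powr (\<tau> + 2) * c_coef i n powr (\<tau> + 1)
           * ((real n + 1 - real i)\<^sup>2 - 2 * (real n + 1 - real i) * (real n + 1) * (a / (a + b))
              + (real n + 1)\<^sup>2 * (a / (a + b)) * ((a + 1) / (a + b + 1))) * Beta a b"
proof -
  define K where "K = (\<beta> / \<alpha>) powr (\<tau> + 2) * c_coef i n powr (\<tau> + 1)"
  define M where "M = ((real n + 1 - real i)\<^sup>2
      - 2 * (real n + 1 - real i) * (real n + 1) * (a / (a + b))
      + (real n + 1)\<^sup>2 * (a / (a + b)) * ((a + 1) / (a + b + 1))) * Beta a b"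
  define H where "H x = (\<beta> / \<alpha> * (real (n + 1) * loglogistic_cdf \<alpha> \<beta> x - real i))\<^sup>2
      * f_os i n \<alpha> \<beta> x powr (\<tau> + 1)" for x
  have J: "J_os i n \<beta> \<tau> \<alpha> = (LINT x:{0<..}|lborel. H x)"
    unfolding J_os_def H_def
    by (rule set_lebesgue_integral_cong) (use assms deriv_ln_f_os in auto)
  have exponents: "(real i - 1 / \<beta>) * (\<tau> + 1) + (1 / \<beta> - 1) = b - 1"
    "(real n + 1 - real i + 1 / \<beta>) * (\<tau> + 1) - (1 / \<beta> + 1) = a - 1"
    using a b by simp_all
  have substituted:
    "loglogistic_quantile \<alpha> \<beta> u / (\<beta> * u * (1 - u)) * H (loglogistic_quantile \<alpha> \<beta> u)
      = K * (((real n + 1) * u - real i)\<^sup>2 * u powr (b - 1) * (1 - u) powr (a - 1))"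
    if "u \<in> {0<..<1}" for u
    using J_os_integrand_loglogistic_quantile[OF assms(1,2) that, of n i \<tau>]
    unfolding H_def exponents K_def of_nat_add of_nat_1 by (simp add: mult_ac)
  have "((\<lambda>u. loglogistic_quantile \<alpha> \<beta> u / (\<beta> * u * (1 - u))
              * H (loglogistic_quantile \<alpha> \<beta> u)) has_integral K * M) {0<..<1}"
    unfolding M_def
    using has_integral_Beta_quadratic[OF a(2) b(2), of "real n + 1" "real i",
        THEN has_integral_mult_right]
    by (rule has_integral_cong[THEN iffD2, rotated]) (erule substituted)
  moreover have "H x \<ge> 0" for x
    unfolding H_def by simp
  ultimately have "H absolutely_integrable_on {0<..}" "integral {0<..} H = K * M"
    using loglogistic_quantile_substitution[OF assms(1,2)] by blast+
  moreover have "H \<in> borel_measurable borel"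
    unfolding H_def f_os_def loglogistic_cdf_def by measurable
  ultimately show ?thesis
    unfolding J K_def M_def by (simp add: set_lborel_integral_eq_integral)
qed

theorem theorem3:
  fixes n i :: nat and \<alpha> \<beta> \<tau> :: real
  assumes "n \<ge> 1" "1 \<le> i" "i \<le> n" "\<alpha> > 0" "\<beta> > 0" "\<tau> \<ge> 0"
    and "real i * \<beta> * (\<tau> + 1) > \<tau>"
  shows "let a = ((real n - real i + 1) * \<tau> * \<beta> + (real n - real i + 1) * \<beta> + \<tau>) / \<beta>;
             b = (real i * \<tau> * \<beta> + real i * \<beta> - \<tau>) / \<beta>;
             A1 = (\<beta> / \<alpha>) powr (\<tau> + 2) * (real n - real i + 1)\<^sup>2
                  * c_coef i n powr (\<tau> + 1) * Beta a b;
             A2 = (\<beta> / \<alpha>) powr (\<tau> + 2) * (real n + 1)\<^sup>2 * c_coef i n powr (\<tau> + 1)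
                  * (((real n - real i + 1) * \<tau> * \<beta> + (real n - real i + 2) * \<beta> + \<tau>)
                     / (\<beta> * ((real n + 1) * \<tau> + (real n + 2))))
                  * (((real n - real i + 1) * \<tau> * \<beta> + (real n - real i + 1) * \<beta> + \<tau>)
                     / (\<beta> * ((real n + 1) * \<tau> + (real n + 1))))
                  * Beta a b;
             A3 = (\<beta> / \<alpha>) powr (\<tau> + 2) * 2 * (real n - real i + 1) * (real n + 1)
                  * c_coef i n powr (\<tau> + 1)
                  * (((real n - real i + 1) * \<tau> * \<beta> + (real n - real i + 1) * \<beta> + \<tau>)
                     / ((real n + 1) * \<tau> * \<beta> + (real n + 1) * \<beta>))
                  * Beta a b
         in J_os i n \<beta> \<tau> \<alpha> = A1 + A2 - A3"
proof -
  define a where "a = ((real n - real i + 1) * \<tau> * \<beta> + (real n - real i + 1) * \<beta> + \<tau>) / \<beta>"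
  define b where "b = (real i * \<tau> * \<beta> + real i * \<beta> - \<tau>) / \<beta>"
  have "(real n - real i + 1) * \<beta> > 0" "(real n - real i + 1) * \<tau> * \<beta> \<ge> 0"
    using assms(3,5,6) by simp_all
  then have a: "a = (real n + 1 - real i + 1 / \<beta>) * (\<tau> + 1) - 1 / \<beta>" "a > 0"
    unfolding a_def using assms(5,6) by (simp_all add: field_simps)
  have b: "b = (real i - 1 / \<beta>) * (\<tau> + 1) + 1 / \<beta>" "b > 0"
    using assms(5,7) by (auto simp: b_def field_simps)
  define X Y where "X = a / (a + b)" and "Y = (a + 1) / (a + b + 1)"
  have ab: "a + b = (real n + 1) * (\<tau> + 1)"
    using assms(5) by (simp add: a_def b_def field_simps)
  have "((real n - real i + 1) * \<tau> * \<beta> + (real n - real i + 1) * \<beta> + \<tau>)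
               / ((real n + 1) * \<tau> * \<beta> + (real n + 1) * \<beta>) = X"
    and "((real n - real i + 1) * \<tau> * \<beta> + (real n - real i + 1) * \<beta> + \<tau>)
               / (\<beta> * ((real n + 1) * \<tau> + (real n + 1))) = X"
    and "((real n - real i + 1) * \<tau> * \<beta> + (real n - real i + 2) * \<beta> + \<tau>)
               / (\<beta> * ((real n + 1) * \<tau> + (real n + 2))) = Y"
    unfolding X_def Y_def ab using assms(5) by (simp_all add: a_def field_simps)
  then show ?thesis
    unfolding Let_def a_def[symmetric] b_def[symmetric] J_os_eq_Beta[OF assms(4,5) a b]
      X_def[symmetric] Y_def[symmetric]
    by (simp add: algebra_simps)
qed

end
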